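(* Let $K$ be a field containing a primitive $n$-th root of unity $\zeta$ with $\zeta^2\ne1$, let $0\ne x\in K$, let $L\supseteq K$ be a field, and let $\mathcal J_x=\mathcal J_x(1)$. For $b,c\in L$ with $bc=x$ let $\mathtt P(b,c)=L\boldsymbol u$ be the one-dimensional $\mathcal J_x\otimes_KL$-module with $\underline e_0\boldsymbol u=0$, $\underline e_1\boldsymbol u=b\boldsymbol u$, $\underline e_2\boldsymbol u=c\boldsymbol u$. Then for $b,c,e,f\in L$ with $bc=ef=x$, $$\mathrm{Ext}^1_{\mathcal J_x\otimes L}\big(\mathtt P(b,c),\mathtt P(e,f)\big)\cong\begin{cases}L,& b=\zeta e\text{ and } f=\zeta c,\\ L,& b=\zeta^2e\text{ and } f=\zeta^2c,\\ L,& b=e\text{ and } c=f,\\ 0,&\text{otherwise.}\end{cases}$$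
   Context: $\mathcal J_x(1)$ is the $K$-algebra generated by $\underline e_0,\underline e_1,\underline e_2$ subject to $\underline e_0\underline e_1=\zeta\underline e_1\underline e_0$, $\underline e_2\underline e_0=\zeta\underline e_0\underline e_2$, $\underline e_2\underline e_1-\zeta^2\underline e_1\underline e_2=x\underline e_0+x(1-\zeta^2)$. The relations force $bc=x$ for a one-dimensional module on which $\underline e_0$ acts by zero. $\mathrm{Ext}^1$ is computed over $\mathcal J_x\otimes_KL$ (equivalently as $L$-linear Hochschild cohomology $\mathrm{Der}(\mathcal J_x,\mathrm{Hom}_L(M_1,M_2))/\{\text{inner derivations}\}$). *)

theory Defs
  imports Main
begin

text \<open>K is a subfield of the field L (the type 'a).\<close>
definition is_subfield :: "'a::field set \<Rightarrow> bool" where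
  "is_subfield K \<longleftrightarrow> 0 \<in> K \<and> 1 \<in> K \<and>
     (\<forall>a\<in>K. \<forall>b\<in>K. a + b \<in> K \<and> a * b \<in> K \<and> - a \<in> K \<and> inverse a \<in> K)"

definition primitive_root_of_unity :: "nat \<Rightarrow> 'a::field \<Rightarrow> bool" where
  "primitive_root_of_unity n z \<longleftrightarrow> 0 < n \<and> z ^ n = 1 \<and> (\<forall>k. 0 < k \<and> k < n \<longrightarrow> z ^ k \<noteq> 1)"

text \<open>Generators e_0, e_1, e_2; words = monomials of the free algebra (basis over L).\<close>
datatype gen = E0 | E1 | E2

text \<open>A relator is an element of the free algebra over L, given as a list of (coefficient, word).\<close>
type_synonym 'a relator = "('a \<times> gen list) list"

definition J_relators :: "'a::field \<Rightarrow> 'a \<Rightarrow> 'a relator list" where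
  "J_relators z x =
    [ [(1, [E0, E1]), (- z, [E1, E0])],
      [(1, [E2, E0]), (- z, [E0, E2])],
      [(1, [E2, E1]), (- (z^2), [E1, E2]), (- x, [E0]), (- (x * (1 - z^2)), [])] ]"

text \<open>The action of a word on the one-dimensional module P(b,c) = L u:
  e0 acts by 0, e1 by b, e2 by c.\<close>
fun gen_val :: "'a::field \<Rightarrow> 'a \<Rightarrow> gen \<Rightarrow> 'a" where
  "gen_val b c E0 = 0"
| "gen_val b c E1 = b"
| "gen_val b c E2 = c"

definition P_char :: "'a::field \<Rightarrow> 'a \<Rightarrow> gen list \<Rightarrow> 'a" where
  "P_char b c w = prod_list (map (gen_val b c) w)"

text \<open>L-linear derivations of J_x \<otimes> L into the bimodule Hom_L(M1,M2) = L, where M1, M2 are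
  one-dimensional with characters chi1, chi2: (a.phi) = chi2(a) phi, (phi.a) = phi chi1(a).
  A linear map on the free algebra is given by its values d on words; it is a derivation
  iff Leibniz holds on words; it descends to the quotient J iff it vanishes on the two-sided
  ideal generated by the relators, i.e. on all elements a r b.\<close>
definition derivations ::
  "'a::field relator list \<Rightarrow> (gen list \<Rightarrow> 'a) \<Rightarrow> (gen list \<Rightarrow> 'a) \<Rightarrow> (gen list \<Rightarrow> 'a) set" where
  "derivations rels chi1 chi2 =
     {d. (\<forall>u v. d (u @ v) = chi2 u * d v + d u * chi1 v) \<and>
         (\<forall>r\<in>set rels. \<forall>a b. (\<Sum>(t, w)\<leftarrow>r. t * d (a @ w @ b)) = 0)}"

definition inner_derivations ::
  "(gen list \<Rightarrow> 'a::field) \<Rightarrow> (gen list \<Rightarrow> 'a) \<Rightarrow> (gen list \<Rightarrow> 'a) set" where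
  "inner_derivations chi1 chi2 = {d. \<exists>phi. \<forall>w. d w = (chi2 w - chi1 w) * phi}"

definition quotient_dim :: "(gen list \<Rightarrow> 'a::field) set \<Rightarrow> (gen list \<Rightarrow> 'a) set \<Rightarrow> nat \<Rightarrow> bool" where
  "quotient_dim D I k \<longleftrightarrow> (\<exists>B. length B = k \<and> set B \<subseteq> D \<and>
     (\<forall>cs. length cs = k \<longrightarrow> (\<lambda>w. \<Sum>i<k. cs ! i * (B ! i) w) \<in> I \<longrightarrow> (\<forall>i<k. cs ! i = 0)) \<and>
     (\<forall>d\<in>D. \<exists>cs. length cs = k \<and> (\<lambda>w. d w - (\<Sum>i<k. cs ! i * (B ! i) w)) \<in> I))"

text \<open>dim_L Ext^1_{J_x \<otimes> L}(P(b,c), P(e,f)) = k, computed as Der / Inn.\<close>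
definition Ext1_P_dim :: "'a::field \<Rightarrow> 'a \<Rightarrow> 'a \<Rightarrow> 'a \<Rightarrow> 'a \<Rightarrow> 'a \<Rightarrow> nat \<Rightarrow> bool" where
  "Ext1_P_dim z x b c e f k =
     quotient_dim (derivations (J_relators z x) (P_char b c) (P_char e f))
                  (inner_derivations (P_char b c) (P_char e f)) k"

end

theory Submission
  imports Defs
begin

text \<open>A twisted derivation on the free algebra is determined by its values on the three generators,
  and every choice of values extends. Hence a derivation of \<open>J_x\<close> into \<open>Hom_L(P(b,c),P(e,f)) = L\<close>
  is a triple \<open>(t\<^sub>0,t\<^sub>1,t\<^sub>2)\<close> satisfying the relators evaluated by the Leibniz rule:
  \<open>(b - \<zeta>e)t\<^sub>0 = (f - \<zeta>c)t\<^sub>0 = 0\<close> and \<open>(f - \<zeta>\<^sup>2c)t\<^sub>1 + (b - \<zeta>\<^sup>2e)t\<^sub>2 = x t\<^sub>0\<close>, while the inner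
  derivations are the multiples of \<open>(0, e - b, f - c)\<close>, which always solve this system because
  \<open>bc = ef\<close>. Comparing the dimension of the solution space with that of the inner line gives the
  four cases.\<close>

definition twisted_derivation :: "'a::field \<Rightarrow> 'a \<Rightarrow> 'a \<Rightarrow> 'a \<Rightarrow> (gen list \<Rightarrow> 'a) \<Rightarrow> bool" where
  "twisted_derivation b c e f d \<longleftrightarrow>
     (\<forall>u v. d (u @ v) = P_char e f u * d v + d u * P_char b c v)"

lemma P_char_simps [simp]:
  "P_char b c [] = 1"
  "P_char b c (g # w) = gen_val b c g * P_char b c w"
  "P_char b c (u @ v) = P_char b c u * P_char b c v"
  by (simp_all add: P_char_def)

fun derivation_of_gens :: "'a::field \<Rightarrow> 'a \<Rightarrow> 'a \<Rightarrow> 'a \<Rightarrow> (gen \<Rightarrow> 'a) \<Rightarrow> gen list \<Rightarrow> 'a" where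
  "derivation_of_gens b c e f t [] = 0"
| "derivation_of_gens b c e f t (g # w) =
     gen_val e f g * derivation_of_gens b c e f t w + t g * P_char b c w"

lemma twisted_derivation_of_gens: "twisted_derivation b c e f (derivation_of_gens b c e f t)"
  unfolding twisted_derivation_def
proof (intro allI)
  fix u v
  show "derivation_of_gens b c e f t (u @ v) =
      P_char e f u * derivation_of_gens b c e f t v + derivation_of_gens b c e f t u * P_char b c v"
    by (induction u) (simp_all add: algebra_simps)
qed

lemma twisted_derivation_Nil:
  assumes "twisted_derivation b c e f d"
  shows "d [] = 0"
proof -
  have "d ([] @ []) = P_char e f [] * d [] + d [] * P_char b c []"
    using assms unfolding twisted_derivation_def by blast
  then have "d [] = d [] + d []" by simp
  then show ?thesis by (simp only: add_cancel_right_right)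
qed

lemma twisted_derivation_Cons:
  "twisted_derivation b c e f d \<Longrightarrow> d (g # w) = gen_val e f g * d w + d [g] * P_char b c w"
  unfolding twisted_derivation_def by (drule spec[of _ "[g]"], drule spec[of _ w]) simp

lemma twisted_derivation_pair:
  "twisted_derivation b c e f d \<Longrightarrow> d [g, h] = gen_val e f g * d [h] + d [g] * gen_val b c h"
  using twisted_derivation_Cons[of b c e f d g "[h]"] by simp

lemma twisted_derivation_triple:
  "twisted_derivation b c e f d \<Longrightarrow> d (u @ w @ v) =
     P_char e f u * (P_char e f w * d v + d w * P_char b c v) + d u * (P_char b c w * P_char b c v)"
  unfolding twisted_derivation_def by simp

lemma twisted_derivation_eqI:
  assumes "twisted_derivation b c e f d" "twisted_derivation b c e f d'" "\<And>g. d [g] = d' [g]"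
  shows "d = d'"
proof
  fix w show "d w = d' w"
  proof (induction w)
    case Nil
    show ?case by (simp add: twisted_derivation_Nil[OF assms(1)] twisted_derivation_Nil[OF assms(2)])
  next
    case (Cons g w)
    show ?case
      by (simp only: twisted_derivation_Cons[OF assms(1), of g w]
          twisted_derivation_Cons[OF assms(2), of g w] Cons.IH assms(3))
  qed
qed

lemma twisted_derivation_diff:
  "twisted_derivation b c e f d \<Longrightarrow> twisted_derivation b c e f d' \<Longrightarrow>
     twisted_derivation b c e f (\<lambda>w. d w - k * d' w)"
  unfolding twisted_derivation_def by (simp add: algebra_simps)

lemma twisted_derivation_inner:
  "twisted_derivation b c e f (\<lambda>w. (P_char e f w - P_char b c w) * phi)"
  unfolding twisted_derivation_def by (simp add: algebra_simps)

lemma inner_derivationsD: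
  "h \<in> inner_derivations (P_char b c) (P_char e f) \<Longrightarrow>
     \<exists>phi. h [E0] = 0 \<and> h [E1] = (e - b) * phi \<and> h [E2] = (f - c) * phi"
  unfolding inner_derivations_def by (auto intro!: exI)

lemma inner_derivations_iff:
  assumes "twisted_derivation b c e f h"
  shows "h \<in> inner_derivations (P_char b c) (P_char e f) \<longleftrightarrow>
     (\<exists>phi. h [E0] = 0 \<and> h [E1] = (e - b) * phi \<and> h [E2] = (f - c) * phi)"
proof
  assume "\<exists>phi. h [E0] = 0 \<and> h [E1] = (e - b) * phi \<and> h [E2] = (f - c) * phi"
  then obtain phi where gens: "h [E0] = 0" "h [E1] = (e - b) * phi" "h [E2] = (f - c) * phi"
    by blast
  have "h = (\<lambda>w. (P_char e f w - P_char b c w) * phi)"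
  proof (rule twisted_derivation_eqI[OF assms twisted_derivation_inner])
    fix g show "h [g] = (P_char e f [g] - P_char b c [g]) * phi"
      by (cases g) (simp_all add: gens)
  qed
  then show "h \<in> inner_derivations (P_char b c) (P_char e f)"
    unfolding inner_derivations_def by blast
qed (rule inner_derivationsD)

lemma derivations_J_iff:
  assumes "b * c = x" "e * f = x"
  shows "d \<in> derivations (J_relators z x) (P_char b c) (P_char e f) \<longleftrightarrow>
    twisted_derivation b c e f d \<and> (b - z*e) * d [E0] = 0 \<and> (f - z*c) * d [E0] = 0 \<and>
    (f - z^2*c) * d [E1] + (b - z^2*e) * d [E2] = x * d [E0]"
    (is "_ \<longleftrightarrow> ?leib \<and> ?r1 \<and> ?r2 \<and> ?r3")
proof -
  let ?rel = "\<lambda>r. \<forall>u v. (\<Sum>(t, w)\<leftarrow>r. t * d (u @ w @ v)) = 0"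
  have relators: "(\<forall>r\<in>set (J_relators z x). ?rel r) \<longleftrightarrow>
      ?rel [(1, [E0, E1]), (- z, [E1, E0])] \<and> ?rel [(1, [E2, E0]), (- z, [E0, E2])] \<and>
      ?rel [(1, [E2, E1]), (- (z^2), [E1, E2]), (- x, [E0]), (- (x * (1 - z^2)), [])]"
    unfolding J_relators_def by simp
  have "?rel [(1, [E0, E1]), (- z, [E1, E0])] \<longleftrightarrow> ?r1"
    and "?rel [(1, [E2, E0]), (- z, [E0, E2])] \<longleftrightarrow> ?r2"
    and "?rel [(1, [E2, E1]), (- (z^2), [E1, E2]), (- x, [E0]), (- (x * (1 - z^2)), [])] \<longleftrightarrow> ?r3"
    if L: ?leib
  proof -
    note expand = twisted_derivation_triple[OF L] twisted_derivation_pair[OF L]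
      twisted_derivation_Nil[OF L]
    have "(\<Sum>(t, w)\<leftarrow>[(1, [E0, E1]), (- z, [E1, E0])]. t * d (u @ w @ v)) =
        P_char e f u * P_char b c v * ((b - z*e) * d [E0])" for u v
      by (simp add: expand algebra_simps)
    then show "?rel [(1, [E0, E1]), (- z, [E1, E0])] \<longleftrightarrow> ?r1"
      by (force dest: spec[of _ "[]"])
    have "(\<Sum>(t, w)\<leftarrow>[(1, [E2, E0]), (- z, [E0, E2])]. t * d (u @ w @ v)) =
        P_char e f u * P_char b c v * ((f - z*c) * d [E0])" for u v
      by (simp add: expand algebra_simps)
    then show "?rel [(1, [E2, E0]), (- z, [E0, E2])] \<longleftrightarrow> ?r2"
      by (force dest: spec[of _ "[]"])
    \<comment> \<open>the terms with \<open>d u\<close> and \<open>d v\<close> cancel exactly because \<open>bc = ef = x\<close>\<close>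
    have "(\<Sum>(t, w)\<leftarrow>[(1, [E2, E1]), (- (z^2), [E1, E2]), (- x, [E0]), (- (x * (1 - z^2)), [])].
          t * d (u @ w @ v)) =
        P_char e f u * P_char b c v * ((f - z^2*c) * d [E1] + (b - z^2*e) * d [E2] - x * d [E0])
        + P_char e f u * d v * (e * f - x) * (1 - z^2) + d u * P_char b c v * (b * c - x) * (1 - z^2)"
      for u v
      by (simp add: expand algebra_simps)
    then show "?rel [(1, [E2, E1]), (- (z^2), [E1, E2]), (- x, [E0]), (- (x * (1 - z^2)), [])] \<longleftrightarrow> ?r3"
      using assms by (force dest: spec[of _ "[]"])
  qed
  then show ?thesis
    unfolding derivations_def twisted_derivation_def[symmetric] mem_Collect_eq relators by blast
qed

lemma quotient_dim_0I: "(\<And>d. d \<in> D \<Longrightarrow> d \<in> I) \<Longrightarrow> quotient_dim D I 0"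
  unfolding quotient_dim_def by (intro exI[of _ "[]"]) simp

lemma quotient_dim_1I:
  assumes "B \<in> D" and "\<And>k. (\<lambda>w. k * B w) \<in> I \<Longrightarrow> k = 0"
    and "\<And>d. d \<in> D \<Longrightarrow> \<exists>k. (\<lambda>w. d w - k * B w) \<in> I"
  shows "quotient_dim D I 1"
  unfolding quotient_dim_def
proof (intro exI[of _ "[B]"] conjI allI impI ballI)
  show "length [B] = 1" "set [B] \<subseteq> D" using assms(1) by auto
next
  fix cs :: "'a list" and i :: nat
  assume "length cs = 1" "(\<lambda>w. \<Sum>i<1. cs ! i * ([B] ! i) w) \<in> I" "i < 1"
  then show "cs ! i = 0" using assms(2)[of "cs ! 0"] by simp
next
  fix d assume "d \<in> D"
  then obtain k where "(\<lambda>w. d w - k * B w) \<in> I" using assms(3) by blast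
  then show "\<exists>cs. length cs = 1 \<and> (\<lambda>w. d w - (\<Sum>i<1. cs ! i * ([B] ! i) w)) \<in> I"
    by (intro exI[of _ "[k]"]) simp
qed

lemma common_solutions_proportional:
  fixes \<alpha> \<beta> p q u v :: "'a::field"
  assumes "\<alpha> * u + \<beta> * v = 0" "\<alpha> * p + \<beta> * q = 0" "\<alpha> \<noteq> 0 \<or> \<beta> \<noteq> 0" "p \<noteq> 0 \<or> q \<noteq> 0"
  shows "\<exists>phi. u = p * phi \<and> v = q * phi"
proof -
  have "\<alpha> * (p * v - q * u) = v * (\<alpha> * p + \<beta> * q) - q * (\<alpha> * u + \<beta> * v)"
    and "\<beta> * (p * v - q * u) = p * (\<alpha> * u + \<beta> * v) - u * (\<alpha> * p + \<beta> * q)"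
    by (simp_all add: algebra_simps)
  then have "\<alpha> * (p * v - q * u) = 0" "\<beta> * (p * v - q * u) = 0"
    using assms(1,2) by simp_all
  then have det: "p * v = q * u" using assms(3) by auto
  show ?thesis
  proof (cases "p = 0")
    case True
    then show ?thesis using det assms(4) by (intro exI[of _ "v / q"]) auto
  next
    case False
    then show ?thesis using det by (intro exI[of _ "u / p"]) (auto simp: field_simps)
  qed
qed

context
  fixes z x b c e f :: "'a::field"
  assumes z_nonzero: "z \<noteq> 0" and z_square: "z ^ 2 \<noteq> 1"
    and bc: "b * c = x" and ef: "e * f = x" and x_nonzero: "x \<noteq> 0"
begin

private lemma nonzero: "b \<noteq> 0" "c \<noteq> 0" "e \<noteq> 0" "f \<noteq> 0"
  using x_nonzero bc ef by auto

private lemma z_not_one: "1 - z \<noteq> 0" "z - 1 \<noteq> 0" "1 - z^2 \<noteq> 0" "z^2 - 1 \<noteq> 0"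
  using z_square by auto

private lemmas derivations_iff = derivations_J_iff[OF bc ef, of _ z]

lemma Ext1_P_dim_rotation:
  assumes b: "b = z * e" and f: "f = z * c"
  shows "Ext1_P_dim z x b c e f 1"
  unfolding Ext1_P_dim_def
proof (rule quotient_dim_1I)
  define B where "B = derivation_of_gens b c e f (case_gen (1 - z) e 0)"
  have LB: "twisted_derivation b c e f B" unfolding B_def by (rule twisted_derivation_of_gens)
  have B: "B [E0] = 1 - z" "B [E1] = e" "B [E2] = 0" unfolding B_def by simp_all
  have x: "x = z * c * e" using ef f by (simp add: ac_simps)
  show "B \<in> derivations (J_relators z x) (P_char b c) (P_char e f)"
    unfolding derivations_iff using LB by (simp add: B b f x power2_eq_square algebra_simps)
  show "k = 0" if kB: "(\<lambda>w. k * B w) \<in> inner_derivations (P_char b c) (P_char e f)" for k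
    using inner_derivationsD[OF kB] B z_not_one by simp
  fix d assume "d \<in> derivations (J_relators z x) (P_char b c) (P_char e f)"
  then have L: "twisted_derivation b c e f d"
    and rel: "(f - z^2*c) * d [E1] + (b - z^2*e) * d [E2] = x * d [E0]"
    unfolding derivations_iff by auto
  have "z * ((1 - z) * (c * d [E1] + e * d [E2])) = (f - z^2*c) * d [E1] + (b - z^2*e) * d [E2]"
    by (simp add: b f power2_eq_square algebra_simps)
  also have "\<dots> = z * (c * e * d [E0])"
    unfolding rel x by (simp add: ac_simps)
  finally have "(1 - z) * (c * d [E1] + e * d [E2]) = c * e * d [E0]"
    using z_nonzero by simp
  define k where "k = d [E0] / (1 - z)"
  have d0: "d [E0] = (1 - z) * k" unfolding k_def using z_not_one by simp
  then have "(1 - z) * (c * d [E1] + e * d [E2]) = (1 - z) * (c * e * k)"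
    using \<open>(1 - z) * _ = c * e * d [E0]\<close> by (simp add: ac_simps)
  then have "c * d [E1] + e * d [E2] = c * e * k"
    using z_not_one by simp
  then have d1: "d [E1] - k * e = - (e * d [E2] / c)"
    using nonzero by (simp add: field_simps)
  define phi where "phi = d [E2] / ((z - 1) * c)"
  have "d [E0] - k * B [E0] = 0" using d0 B by simp
  moreover have "d [E2] - k * B [E2] = (f - c) * phi"
    using B z_not_one nonzero unfolding phi_def f by (simp add: field_simps)
  moreover have "(e - b) * phi = - (e * d [E2] / c)"
    using z_not_one nonzero unfolding phi_def b by (simp add: field_simps)
  then have "d [E1] - k * B [E1] = (e - b) * phi"
    using B d1 by simp
  ultimately show "\<exists>k. (\<lambda>w. d w - k * B w) \<in> inner_derivations (P_char b c) (P_char e f)"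
    by (metis inner_derivations_iff[OF twisted_derivation_diff[OF L LB]])
qed

lemma Ext1_P_dim_square_rotation:
  assumes b: "b = z^2 * e" and f: "f = z^2 * c"
  shows "Ext1_P_dim z x b c e f 1"
  unfolding Ext1_P_dim_def
proof (rule quotient_dim_1I)
  define B where "B = derivation_of_gens b c e f (case_gen 0 1 0)"
  have LB: "twisted_derivation b c e f B" unfolding B_def by (rule twisted_derivation_of_gens)
  have B: "B [E0] = 0" "B [E1] = 1" "B [E2] = 0" unfolding B_def by simp_all
  show "B \<in> derivations (J_relators z x) (P_char b c) (P_char e f)"
    unfolding derivations_iff using LB by (simp add: B f)
  show "k = 0" if kB: "(\<lambda>w. k * B w) \<in> inner_derivations (P_char b c) (P_char e f)" for k
  proof -
    obtain phi where "k = (e - b) * phi" "0 = (f - c) * phi"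
      using inner_derivationsD[OF kB] B by auto
    then show "k = 0" using z_not_one nonzero unfolding b f by (auto simp: algebra_simps)
  qed
  fix d assume "d \<in> derivations (J_relators z x) (P_char b c) (P_char e f)"
  then have L: "twisted_derivation b c e f d" and "(b - z * e) * d [E0] = 0"
    unfolding derivations_iff by auto
  moreover have "b - z * e = z * (z - 1) * e"
    unfolding b by (simp add: power2_eq_square algebra_simps)
  ultimately have d0: "d [E0] = 0" using z_nonzero z_not_one nonzero by simp
  define phi where "phi = d [E2] / ((z^2 - 1) * c)"
  define k where "k = d [E1] - (e - b) * phi"
  have "d [E0] - k * B [E0] = 0" "d [E1] - k * B [E1] = (e - b) * phi"
    using B d0 unfolding k_def by simp_all
  moreover have "d [E2] - k * B [E2] = (f - c) * phi"
    using B z_not_one nonzero unfolding phi_def f by (simp add: field_simps)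
  ultimately show "\<exists>k. (\<lambda>w. d w - k * B w) \<in> inner_derivations (P_char b c) (P_char e f)"
    by (metis inner_derivations_iff[OF twisted_derivation_diff[OF L LB]])
qed

lemma Ext1_P_dim_diagonal:
  assumes b: "b = e" and f: "c = f"
  shows "Ext1_P_dim z x b c e f 1"
  unfolding Ext1_P_dim_def
proof (rule quotient_dim_1I)
  define B where "B = derivation_of_gens b c e f (case_gen 0 e (- c))"
  have LB: "twisted_derivation b c e f B" unfolding B_def by (rule twisted_derivation_of_gens)
  have B: "B [E0] = 0" "B [E1] = e" "B [E2] = - c" unfolding B_def by simp_all
  show "B \<in> derivations (J_relators z x) (P_char b c) (P_char e f)"
    unfolding derivations_iff using LB by (simp add: B b f algebra_simps)
  show "k = 0" if kB: "(\<lambda>w. k * B w) \<in> inner_derivations (P_char b c) (P_char e f)" for k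
    using inner_derivationsD[OF kB] B nonzero unfolding b by simp
  fix d assume "d \<in> derivations (J_relators z x) (P_char b c) (P_char e f)"
  then have L: "twisted_derivation b c e f d" and "(b - z * e) * d [E0] = 0"
    and rel: "(f - z^2*c) * d [E1] + (b - z^2*e) * d [E2] = x * d [E0]"
    unfolding derivations_iff by auto
  moreover have "b - z * e = (1 - z) * e" unfolding b by (simp add: algebra_simps)
  ultimately have d0: "d [E0] = 0" using z_not_one nonzero by simp
  have "(1 - z^2) * (c * d [E1] + e * d [E2]) = (f - z^2*c) * d [E1] + (b - z^2*e) * d [E2]"
    unfolding b f by (simp add: algebra_simps)
  also have "\<dots> = 0" using rel d0 by simp
  finally have "c * d [E1] + e * d [E2] = 0" using z_not_one by simp
  then have d2: "d [E2] = - (c * (d [E1] / e))"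
    using nonzero by (simp add: field_simps eq_neg_iff_add_eq_0)
  define k where "k = d [E1] / e"
  have "d [E0] - k * B [E0] = 0" "d [E1] - k * B [E1] = (e - b) * 0"
    "d [E2] - k * B [E2] = (f - c) * 0"
    using B d0 d2 nonzero unfolding k_def by simp_all
  then show "\<exists>k. (\<lambda>w. d w - k * B w) \<in> inner_derivations (P_char b c) (P_char e f)"
    by (metis inner_derivations_iff[OF twisted_derivation_diff[OF L LB]])
qed

lemma Ext1_P_dim_generic:
  assumes "\<not> (b = z * e \<and> f = z * c)" "\<not> (b = z^2 * e \<and> f = z^2 * c)" "\<not> (b = e \<and> c = f)"
  shows "Ext1_P_dim z x b c e f 0"
  unfolding Ext1_P_dim_def
proof (rule quotient_dim_0I)
  fix d assume "d \<in> derivations (J_relators z x) (P_char b c) (P_char e f)"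
  then have L: "twisted_derivation b c e f d"
    and "(b - z * e) * d [E0] = 0" "(f - z * c) * d [E0] = 0"
    and rel: "(f - z^2*c) * d [E1] + (b - z^2*e) * d [E2] = x * d [E0]"
    unfolding derivations_iff by auto
  then have d0: "d [E0] = 0" using assms(1) by auto
  have "(f - z^2*c) * (e - b) + (b - z^2*e) * (f - c) = (1 - z^2) * (e * f - b * c)"
    by (simp add: algebra_simps)
  then have "(f - z^2*c) * (e - b) + (b - z^2*e) * (f - c) = 0"
    using bc ef by simp
  then obtain phi where "d [E1] = (e - b) * phi" "d [E2] = (f - c) * phi"
    using common_solutions_proportional[of "f - z^2*c" "d [E1]" "b - z^2*e" "d [E2]" "e - b" "f - c"]
      rel d0 assms(2,3) by auto
  then show "d \<in> inner_derivations (P_char b c) (P_char e f)"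
    using inner_derivations_iff[OF L] d0 by blast
qed

end

theorem proposition6p1:
  fixes K :: "'a::field set" and n :: nat and z x b c e f :: 'a
  assumes "is_subfield K"
    and "z \<in> K" and "primitive_root_of_unity n z" and "z ^ 2 \<noteq> 1"
    and "x \<in> K" and "x \<noteq> 0"
    and "b * c = x" and "e * f = x"
  shows "Ext1_P_dim z x b c e f
           (if (b = z * e \<and> f = z * c) \<or> (b = z^2 * e \<and> f = z^2 * c) \<or> (b = e \<and> c = f)
            then 1 else 0)"
proof -
  have "z \<noteq> 0"
    using assms(3) unfolding primitive_root_of_unity_def by (auto simp: zero_power)
  note cases = Ext1_P_dim_rotation Ext1_P_dim_square_rotation Ext1_P_dim_diagonal Ext1_P_dim_generic
  show ?thesis
    using cases[OF \<open>z \<noteq> 0\<close> assms(4,7,8,6)] by auto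
qed

end
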